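(* Let $N\ge1$ be an integer, $d>0$, $T\ge (N+1)d$, and $0\le s_1\le\dots\le s_N$. Let $\bar x_1,\dots,\bar x_{N+1}$ be the output of the Inter-Update Balancing Algorithm defined in the context. Then the sequence $\{\bar x_i\}_{i=1}^N$ is non-increasing. Moreover, $\bar x_j>\bar x_{j+1}$ holds only if $\sum_{i=1}^j\bar x_i=s_j+jd$.
   Context: Inter-Update Balancing Algorithm. Set $s_0:=0$, $s_{N+1}:=T-d$, and $i_0:=0$. For $k=0,1,2,\dots$, while $i_k<N+1$, do the following. 1. Compute $M_k=\max_{i_k<j\le N+1}\frac{s_j-s_{i_k}}{j-i_k}$. 2. Let $i_{k+1}$ be the largest index $j\in\{i_k+1,\dots,N+1\}$ attaining this maximum. 3. Set $\bar x_i=M_k+d$ for all $i_k<i\le i_{k+1}$. The algorithm stops once $i_{k+1}=N+1$. For example, the first step computes the maximum of $\{s_1,s_2/2,\dots,s_N/N,(T-d)/(N+1)\}$. *)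

theory Defs
  imports Complex_Main
begin

definition sext :: "(nat \<Rightarrow> real) \<Rightarrow> nat \<Rightarrow> real \<Rightarrow> real \<Rightarrow> nat \<Rightarrow> real" where
  "sext s N T d j = (if j = 0 then 0 else if j = N + 1 then T - d else s j)"

definition slope :: "(nat \<Rightarrow> real) \<Rightarrow> nat \<Rightarrow> real \<Rightarrow> real \<Rightarrow> nat \<Rightarrow> nat \<Rightarrow> real" where
  "slope s N T d i j = (sext s N T d j - sext s N T d i) / (real j - real i)"

text \<open>M_k as a function of the current index i_k.\<close>
definition Mval :: "(nat \<Rightarrow> real) \<Rightarrow> nat \<Rightarrow> real \<Rightarrow> real \<Rightarrow> nat \<Rightarrow> real" where
  "Mval s N T d i = Max (slope s N T d i ` {i<..N+1})"

text \<open>The indices i_k (constant N+1 once the algorithm has stopped).\<close>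
primrec ibar :: "(nat \<Rightarrow> real) \<Rightarrow> nat \<Rightarrow> real \<Rightarrow> real \<Rightarrow> nat \<Rightarrow> nat" where
  "ibar s N T d 0 = 0"
| "ibar s N T d (Suc k) =
     (let i = ibar s N T d k in
      if i < N + 1 then (GREATEST j. j \<in> {i<..N+1} \<and> slope s N T d i j = Mval s N T d i)
      else i)"

text \<open>Output: xbar_i = M_k + d for the unique k with i_k < i <= i_{k+1}.\<close>
definition xbar :: "(nat \<Rightarrow> real) \<Rightarrow> nat \<Rightarrow> real \<Rightarrow> real \<Rightarrow> nat \<Rightarrow> real" where
  "xbar s N T d i =
     (let k = (LEAST k. i \<le> ibar s N T d (Suc k)) in Mval s N T d (ibar s N T d k) + d)"

end

theory Submission
  imports Defs
begin

text \<open>The breakpoints \<open>i\<^sub>k\<close> trace the least concave majorant of the points \<open>(j, s\<^sub>j)\<close>: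
  since \<open>i\<^sub>k\<^sub>+\<^sub>1\<close> lies on a chord of maximal slope from \<open>i\<^sub>k\<close>, every chord starting at
  \<open>i\<^sub>k\<^sub>+\<^sub>1\<close> is at most as steep, so the slopes \<open>M\<^sub>k\<close>, and with them the \<open>x\<^sub>i\<close>,
  do not increase. On each block \<open>(i\<^sub>k, i\<^sub>k\<^sub>+\<^sub>1]\<close> the values \<open>x\<^sub>i - d\<close> add up to the
  rise \<open>s(i\<^sub>k\<^sub>+\<^sub>1) - s(i\<^sub>k)\<close>, so the partial sums telescope to \<open>s(i\<^sub>k) + i\<^sub>k d\<close> at every
  breakpoint; and \<open>x\<^sub>j > x\<^sub>j\<^sub>+\<^sub>1\<close> forces \<open>j\<close> to be a breakpoint.
  None of this uses the hypotheses on \<open>s\<close>, \<open>d\<close> and \<open>T\<close>.\<close>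

lemma chord_slope_after_steepest:
  fixes a b c ya yb yc :: real
  assumes "a < b" "b < c" and steepest: "(yc - ya) / (c - a) \<le> (yb - ya) / (b - a)"
  shows "(yc - yb) / (c - b) \<le> (yb - ya) / (b - a)"
proof -
  define m where "m = (yb - ya) / (b - a)"
  have rise_ab: "yb - ya = m * (b - a)" using \<open>a < b\<close> by (simp add: m_def)
  have "yc - ya \<le> m * (c - a)" using steepest assms(1,2) by (simp add: m_def pos_divide_le_eq)
  then have "yc - yb \<le> m * (c - b)" using rise_ab by (simp add: algebra_simps)
  then show ?thesis using \<open>b < c\<close> by (simp add: m_def pos_divide_le_eq)
qed

context
  fixes s :: "nat \<Rightarrow> real" and N :: nat and T d :: real
begin

lemma Mval_attained:
  assumes "i < N + 1"
  shows "\<exists>j\<in>{i<..N+1}. slope s N T d i j = Mval s N T d i"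
proof -
  have "slope s N T d i ` {i<..N+1} \<noteq> {}" using assms by auto
  then show ?thesis
    using Max_in[of "slope s N T d i ` {i<..N+1}"] unfolding Mval_def
    by (metis finite_greaterThanAtMost finite_imageI imageE)
qed

lemma slope_le_Mval: "j \<in> {i<..N+1} \<Longrightarrow> slope s N T d i j \<le> Mval s N T d i"
  unfolding Mval_def by (rule Max_ge) auto

lemma last_steepest_index:
  assumes "i < N + 1"
  defines "g \<equiv> GREATEST j. j \<in> {i<..N+1} \<and> slope s N T d i j = Mval s N T d i"
  shows "i < g" "g \<le> N + 1" "slope s N T d i g = Mval s N T d i"
proof -
  obtain j where j: "j \<in> {i<..N+1}" "slope s N T d i j = Mval s N T d i"
    using Mval_attained[OF assms(1)] by blast
  have "g \<in> {i<..N+1} \<and> slope s N T d i g = Mval s N T d i"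
    unfolding g_def by (rule GreatestI_nat[where k = j and b = "N + 1"]) (use j in auto)
  then show "i < g" "g \<le> N + 1" "slope s N T d i g = Mval s N T d i" by auto
qed

lemma ibar_le: "ibar s N T d k \<le> N + 1"
proof (induction k)
  case (Suc k)
  then show ?case using last_steepest_index(2)[of "ibar s N T d k"] by (auto simp: Let_def)
qed simp

lemma ibar_less_Suc: "ibar s N T d k < N + 1 \<Longrightarrow> ibar s N T d k < ibar s N T d (Suc k)"
  using last_steepest_index(1) by (auto simp: Let_def)

lemma ibar_Suc_stopped: "ibar s N T d k = N + 1 \<Longrightarrow> ibar s N T d (Suc k) = N + 1"
  by (simp add: Let_def)

lemma slope_ibar_Suc:
  "ibar s N T d k < N + 1 \<Longrightarrow>
    slope s N T d (ibar s N T d k) (ibar s N T d (Suc k)) = Mval s N T d (ibar s N T d k)"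
  using last_steepest_index(3) by (auto simp: Let_def)

lemma ibar_le_Suc: "ibar s N T d k \<le> ibar s N T d (Suc k)"
  using ibar_less_Suc[of k] ibar_Suc_stopped[of k] ibar_le[of k] by linarith

lemma ibar_mono: "k \<le> k' \<Longrightarrow> ibar s N T d k \<le> ibar s N T d k'"
  using lift_Suc_mono_le[of "ibar s N T d", OF ibar_le_Suc] by blast

lemma ibar_ge_min: "min k (N + 1) \<le> ibar s N T d k"
proof (induction k)
  case (Suc k)
  then show ?case using ibar_less_Suc[of k] ibar_Suc_stopped[of k] ibar_le[of k] by linarith
qed simp

lemma ibar_eq_end: "N + 1 \<le> k \<Longrightarrow> ibar s N T d k = N + 1"
  using ibar_ge_min[of k] ibar_le[of k] by simp

lemma Mval_ibar_Suc_le: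
  assumes "ibar s N T d (Suc k) < N + 1"
  shows "Mval s N T d (ibar s N T d (Suc k)) \<le> Mval s N T d (ibar s N T d k)"
proof -
  define a b where "a = ibar s N T d k" and "b = ibar s N T d (Suc k)"
  have ab: "a < b" "b < N + 1"
    using assms ibar_less_Suc[of k] ibar_le_Suc[of k] unfolding a_def b_def by linarith+
  have M_a: "Mval s N T d a = slope s N T d a b"
    using slope_ibar_Suc[of k] ab unfolding a_def b_def by simp
  have "slope s N T d b j \<le> Mval s N T d a" if "j \<in> {b<..N+1}" for j
    using chord_slope_after_steepest[of "real a" "real b" "real j"]
      slope_le_Mval[of j a] that ab unfolding M_a by (simp add: slope_def)
  moreover obtain j where "j \<in> {b<..N+1}" "slope s N T d b j = Mval s N T d b"
    using Mval_attained[of b] ab by blast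
  ultimately show ?thesis unfolding a_def b_def by metis
qed

lemma Mval_ibar_antimono:
  assumes "k \<le> k'" "ibar s N T d k' < N + 1"
  shows "Mval s N T d (ibar s N T d k') \<le> Mval s N T d (ibar s N T d k)"
  using assms
proof (induction k' rule: dec_induct)
  case (step m)
  then have "ibar s N T d m < N + 1" using ibar_le_Suc[of m] by linarith
  then show ?case using step Mval_ibar_Suc_le[of m] by linarith
qed simp

definition block :: "nat \<Rightarrow> nat" where
  "block i = (LEAST k. i \<le> ibar s N T d (Suc k))"

lemma xbar_eq_block: "xbar s N T d i = Mval s N T d (ibar s N T d (block i)) + d"
  unfolding xbar_def block_def Let_def by simp

lemma le_ibar_Suc_block:
  assumes "i \<le> N + 1"
  shows "i \<le> ibar s N T d (Suc (block i))"
proof -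
  have "i \<le> ibar s N T d (Suc N)" using assms ibar_eq_end[of "Suc N"] by simp
  then show ?thesis unfolding block_def by (rule LeastI)
qed

lemma block_le: "i \<le> ibar s N T d (Suc k) \<Longrightarrow> block i \<le> k"
  unfolding block_def by (rule Least_le)

lemma ibar_block_less:
  assumes "1 \<le> i" "i \<le> N + 1"
  shows "ibar s N T d (block i) < i"
proof (cases "block i")
  case (Suc m)
  then have "\<not> i \<le> ibar s N T d (Suc m)" using block_le[of i m] by linarith
  then show ?thesis using Suc by simp
qed (use assms in simp)

lemma block_mono: "i \<le> j \<Longrightarrow> j \<le> N + 1 \<Longrightarrow> block i \<le> block j"
  using le_ibar_Suc_block[of j] by (intro block_le) simp

lemma block_eqI:
  assumes "ibar s N T d k < i" "i \<le> ibar s N T d (Suc k)"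
  shows "block i = k"
proof -
  have "i \<le> N + 1" using assms(2) ibar_le[of "Suc k"] by simp
  then have "\<not> block i < k"
    using le_ibar_Suc_block[of i] ibar_mono[of "Suc (block i)" k] assms(1) by fastforce
  then show ?thesis using block_le[OF assms(2)] by simp
qed

lemma sum_xbar_upto_ibar:
  "(\<Sum>i=1..ibar s N T d m. xbar s N T d i) = sext s N T d (ibar s N T d m) + real (ibar s N T d m) * d"
proof (induction m)
  case 0
  then show ?case by (simp add: sext_def)
next
  case (Suc m)
  define a b where "a = ibar s N T d m" and "b = ibar s N T d (Suc m)"
  show ?case
  proof (cases "a < N + 1")
    case False
    then have "b = a" using ibar_Suc_stopped[of m] ibar_le[of m] unfolding a_def b_def by simp
    then show ?thesis using Suc unfolding a_def b_def by simp
  next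
    case True
    then have "a < b" using ibar_less_Suc[of m] unfolding a_def b_def by simp
    have rise: "Mval s N T d a * (real b - real a) = sext s N T d b - sext s N T d a"
      using slope_ibar_Suc[of m] True \<open>a < b\<close> unfolding a_def b_def
      by (auto simp: slope_def divide_eq_eq)
    have block_sum: "(\<Sum>i\<in>{a<..b}. xbar s N T d i) = (real b - real a) * (Mval s N T d a + d)"
    proof -
      have "xbar s N T d i = Mval s N T d a + d" if "i \<in> {a<..b}" for i
        using block_eqI[of m i] that unfolding xbar_eq_block a_def b_def by auto
      then show ?thesis using \<open>a < b\<close> by (simp add: of_nat_diff)
    qed
    have "{1..b} = {1..a} \<union> {a<..b}" using \<open>a < b\<close> by auto
    then have "(\<Sum>i=1..b. xbar s N T d i) = (\<Sum>i=1..a. xbar s N T d i) + (\<Sum>i\<in>{a<..b}. xbar s N T d i)"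
      by (metis sum.union_disjoint finite_atLeastAtMost finite_greaterThanAtMost
          ivl_disj_int_two(8))
    then show ?thesis using Suc rise block_sum unfolding a_def b_def by (simp add: algebra_simps)
  qed
qed

end

theorem lemma4:
  fixes s :: "nat \<Rightarrow> real" and N :: nat and T d :: real
  assumes "N \<ge> 1" and "d > 0" and "T \<ge> real (N + 1) * d"
    and "0 \<le> s 1" and "\<And>i. 1 \<le> i \<Longrightarrow> i < N \<Longrightarrow> s i \<le> s (i + 1)"
  shows "(\<forall>i j. 1 \<le> i \<longrightarrow> i \<le> j \<longrightarrow> j \<le> N \<longrightarrow> xbar s N T d j \<le> xbar s N T d i)
    \<and> (\<forall>j. 1 \<le> j \<longrightarrow> j \<le> N \<longrightarrow> xbar s N T d j > xbar s N T d (j + 1) \<longrightarrow>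
          (\<Sum>i=1..j. xbar s N T d i) = s j + real j * d)"
proof (intro conjI allI impI)
  fix i j :: nat assume "1 \<le> i" "i \<le> j" "j \<le> N"
  then show "xbar s N T d j \<le> xbar s N T d i"
    using Mval_ibar_antimono[OF block_mono] ibar_block_less[where s = s and N = N and T = T and d = d and i = j]
    unfolding xbar_eq_block by simp
next
  fix j :: nat assume j: "1 \<le> j" "j \<le> N" "xbar s N T d (j + 1) < xbar s N T d j"
  let ?k = "block s N T d j"
  have "block s N T d (j + 1) \<noteq> ?k" using j(3) unfolding xbar_eq_block by auto
  then have "j = ibar s N T d (Suc ?k)"
    using le_ibar_Suc_block[where s = s and N = N and T = T and d = d and i = j] block_le[where s = s and N = N and T = T and d = d and i = "j + 1" and k = ?k]
      block_mono[where s = s and N = N and T = T and d = d and i = j and j = "j + 1"] j(2) by fastforce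
  then show "(\<Sum>i=1..j. xbar s N T d i) = s j + real j * d"
    using sum_xbar_upto_ibar[of s N T d "Suc ?k"] j(1,2) by (simp add: sext_def)
qed

end
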